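(* Let $p,q$ be smooth strictly positive probability densities on $[0,1]$ with CDFs $F_p,F_q$ and inverse CDFs $F_p^{-1},F_q^{-1}:[0,1]\to[0,1]$. (i) For $V\in C^\infty([0,1])$ and $\mathcal V(p)=\int_0^1V p\,dx$: $\mathrm D_{\mathrm T,\mathcal V}(p\|q)=\int_0^1\mathrm D_V(F_p^{-1}(s)\|F_q^{-1}(s))\,ds$, with $\mathrm D_V(z_1\|z_2)=V(z_1)-V(z_2)-V'(z_2)(z_1-z_2)$. (ii) For $\tilde W\in C^\infty([-1,1])$ even and $\mathcal W(p)=\tfrac12\int_0^1\!\!\int_0^1\tilde W(x-\tilde x)p(x)p(\tilde x)\,dx\,d\tilde x$: $\mathrm D_{\mathrm T,\mathcal W}(p\|q)=\tfrac12\int_0^1\!\!\int_0^1\mathrm D_{\tilde W}\big(F_p^{-1}(s)-F_p^{-1}(\tilde s)\,\|\,F_q^{-1}(s)-F_q^{-1}(\tilde s)\big)ds\,d\tilde s$, where $\mathrm D_{\tilde W}$ is defined as $\mathrm D_V$ with $\tilde W$ in place of $V$. (iii) For $U:(0,\infty)\to\mathbb R$ of class $C^2$ and $\mathcal U(p)=\int_0^1U(p(x))dx$, set $\tilde U(z)=zU(1/z)$ for $z>0$. Then $\mathrm D_{\mathrm T,\mathcal U}(p\|q)=\int_0^1\mathrm D_{\tilde U}\big((F_p^{-1})'(s)\,\|\,(F_q^{-1})'(s)\big)ds$, with $\mathrm D_{\tilde U}(z_1\|z_2)=\tilde U(z_1)-\tilde U(z_2)-\tilde U'(z_2)(z_1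-z_2)$.
   Context: On $[0,1]$ the optimal transport map from $q$ to $p$ is the monotone map $T=F_p^{-1}\circ F_q$, which satisfies $p(T(x))T'(x)=q(x)$. For a smooth functional $\mathcal F$ on such densities with $L^2$ first variation $\frac{\delta\mathcal F}{\delta q}(q)(x)$ (for $\mathcal V,\mathcal W,\mathcal U$ these are $V(x)$, $\int_0^1\tilde W(x-\tilde x)q(\tilde x)d\tilde x$, $U'(q(x))$), the transport Bregman divergence is $$\mathrm D_{\mathrm T,\mathcal F}(p\|q)=\mathcal F(p)-\mathcal F(q)-\int_0^1\frac{d}{dx}\Big(\frac{\delta\mathcal F}{\delta q}(q)(x)\Big)\,(T(x)-x)\,q(x)\,dx .$$ *)

theory Defs
  imports "HOL-Analysis.Analysis"
begin

definition smooth_on :: "real set \<Rightarrow> (real \<Rightarrow> real) \<Rightarrow> bool" where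
  "smooth_on S f \<longleftrightarrow> (\<exists>D :: nat \<Rightarrow> real \<Rightarrow> real.
      (\<forall>x\<in>S. D 0 x = f x) \<and>
      (\<forall>n. \<forall>x\<in>S. (D n has_real_derivative D (Suc n) x) (at x within S)))"

definition C2_on :: "real set \<Rightarrow> (real \<Rightarrow> real) \<Rightarrow> bool" where
  "C2_on S f \<longleftrightarrow> (\<exists>f1 f2 :: real \<Rightarrow> real.
      (\<forall>x\<in>S. (f has_real_derivative f1 x) (at x within S)) \<and>
      (\<forall>x\<in>S. (f1 has_real_derivative f2 x) (at x within S)) \<and>
      continuous_on S f2)"

definition smooth_pos_density :: "(real \<Rightarrow> real) \<Rightarrow> bool" where
  "smooth_pos_density p \<longleftrightarrow> smooth_on {0..1} p \<and> (\<forall>x\<in>{0..1}. p x > 0)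
      \<and> integral {0..1} p = 1"

definition cdf :: "(real \<Rightarrow> real) \<Rightarrow> real \<Rightarrow> real" where
  "cdf p x = integral {0..x} p"

definition inv_cdf :: "(real \<Rightarrow> real) \<Rightarrow> real \<Rightarrow> real" where
  "inv_cdf p = the_inv_into {0..1} (cdf p)"

definition ot_map :: "(real \<Rightarrow> real) \<Rightarrow> (real \<Rightarrow> real) \<Rightarrow> real \<Rightarrow> real" where
  "ot_map p q x = inv_cdf p (cdf q x)"

text \<open>Transport Bregman divergence of a functional F with L^2 first variation dF
  (dF q x = first variation of F at q, evaluated at x).\<close>
definition transport_bregman ::
  "((real \<Rightarrow> real) \<Rightarrow> real) \<Rightarrow> ((real \<Rightarrow> real) \<Rightarrow> real \<Rightarrow> real)
   \<Rightarrow> (real \<Rightarrow> real) \<Rightarrow> (real \<Rightarrow> real) \<Rightarrow> real" where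
  "transport_bregman F dF p q =
     F p - F q - integral {0..1} (\<lambda>x. deriv (dF q) x * (ot_map p q x - x) * q x)"

definition bregman :: "(real \<Rightarrow> real) \<Rightarrow> real \<Rightarrow> real \<Rightarrow> real" where
  "bregman f z1 z2 = f z1 - f z2 - deriv f z2 * (z1 - z2)"

definition potential_energy :: "(real \<Rightarrow> real) \<Rightarrow> (real \<Rightarrow> real) \<Rightarrow> real" where
  "potential_energy V p = integral {0..1} (\<lambda>x. V x * p x)"

definition potential_fv :: "(real \<Rightarrow> real) \<Rightarrow> (real \<Rightarrow> real) \<Rightarrow> real \<Rightarrow> real" where
  "potential_fv V q x = V x"

definition interaction_energy :: "(real \<Rightarrow> real) \<Rightarrow> (real \<Rightarrow> real) \<Rightarrow> real" where
  "interaction_energy W p =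
     1/2 * integral {0..1} (\<lambda>x. integral {0..1} (\<lambda>y. W (x - y) * p x * p y))"

definition interaction_fv :: "(real \<Rightarrow> real) \<Rightarrow> (real \<Rightarrow> real) \<Rightarrow> real \<Rightarrow> real" where
  "interaction_fv W q x = integral {0..1} (\<lambda>y. W (x - y) * q y)"

definition internal_energy :: "(real \<Rightarrow> real) \<Rightarrow> (real \<Rightarrow> real) \<Rightarrow> real" where
  "internal_energy U p = integral {0..1} (\<lambda>x. U (p x))"

definition internal_fv :: "(real \<Rightarrow> real) \<Rightarrow> (real \<Rightarrow> real) \<Rightarrow> real \<Rightarrow> real" where
  "internal_fv U q x = deriv U (q x)"

end

theory Submission
  imports Defs
begin

text \<open>Everything is computed in quantile coordinates. For a positive continuous density p the
  substitution x = F_p^{-1}(s) turns the integral of h p into the integral of h(F_p^{-1}(s)) over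
  [0,1], and the monotone map satisfies T(F_q^{-1}(s)) = F_p^{-1}(s). For the potential and the
  interaction energy the first-variation term then is exactly the linear part of the Bregman
  integrand (for W after symmetrising in s and t, using that W' is odd). For the internal energy,
  q (U'(q))' is the derivative of the pressure q U'(q) - U(q); integrating by parts against the
  displacement T(x) - x, which vanishes at 0 and 1, and using T' = q / p(T) and
  (F_p^{-1})' = 1 / p(F_p^{-1}) produces the Bregman divergence of the perspective z U(1/z).\<close>

lemma smooth_on_imp_C1:
  assumes "smooth_on S f"
  obtains f' where "\<And>x. x \<in> S \<Longrightarrow> (f has_real_derivative f' x) (at x within S)"
    and "continuous_on S f'"
proof -
  obtain D where D0: "\<And>x. x \<in> S \<Longrightarrow> D 0 x = f x"
    and DS: "\<And>n x. x \<in> S \<Longrightarrow> (D n has_real_derivative D (Suc n) x) (at x within S)"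
    using assms unfolding smooth_on_def by blast
  have f': "(f has_real_derivative D (Suc 0) x) (at x within S)" if "x \<in> S" for x
    using DS[of x 0, OF that]
    by (rule has_field_derivative_transform_within[where d=1]) (simp_all add: D0 that)
  moreover have "continuous_on S (D (Suc 0))"
    using DS by (rule DERIV_continuous_on)
  ultimately show thesis by (rule that)
qed

lemma has_real_derivative_Icc_interior:
  assumes "(f has_real_derivative f') (at x within {a..b})" and "x \<in> {a<..<b}"
  shows "(f has_real_derivative f') (at x)"
  using assms by (simp add: at_within_Icc_at)

lemma deriv_Icc_interior:
  assumes "\<And>x. x \<in> {a..b} \<Longrightarrow> (f has_real_derivative f' x) (at x within {a..b})"
    and "x \<in> {a<..<b}"
  shows "deriv f x = f' x"
  using assms by (intro DERIV_imp_deriv has_real_derivative_Icc_interior) auto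

lemma integral_cong_interior:
  fixes f g :: "real \<Rightarrow> real"
  assumes "\<And>x. x \<in> {a<..<b} \<Longrightarrow> f x = g x"
  shows "integral {a..b} f = integral {a..b} g"
  by (rule integral_spike[of "{a, b}"]) (use assms in auto)

lemma integral_by_parts_vanishing:
  fixes f f' g g' :: "real \<Rightarrow> real"
  assumes "a \<le> b"
    and cont: "continuous_on {a..b} f" "continuous_on {a..b} f'"
      "continuous_on {a..b} g" "continuous_on {a..b} g'"
    and f': "\<And>x. x \<in> {a<..<b} \<Longrightarrow> (f has_real_derivative f' x) (at x)"
    and g': "\<And>x. x \<in> {a<..<b} \<Longrightarrow> (g has_real_derivative g' x) (at x)"
    and "g a = 0" "g b = 0"
  shows "integral {a..b} (\<lambda>x. f' x * g x) = - integral {a..b} (\<lambda>x. f x * g' x)"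
proof -
  have "((\<lambda>x. f' x * g x + f x * g' x) has_integral f b * g b - f a * g a) {a..b}"
  proof (rule fundamental_theorem_of_calculus_interior)
    show "continuous_on {a..b} (\<lambda>x. f x * g x)" using cont by (intro continuous_intros)
    fix x assume "x \<in> {a<..<b}"
    from DERIV_mult[OF f'[OF this] g'[OF this]]
    show "((\<lambda>x. f x * g x) has_vector_derivative f' x * g x + f x * g' x) (at x)"
      by (simp add: has_real_derivative_iff_has_vector_derivative mult.commute)
  qed fact
  then have "integral {a..b} (\<lambda>x. f' x * g x + f x * g' x) = 0"
    using assms by (simp add: integral_unique)
  then show ?thesis
    using cont by (simp add: integral_add integrable_continuous_real continuous_intros)
qed

lemma derivative_of_even_is_odd:
  fixes W W' :: "real \<Rightarrow> real"
  assumes even: "\<And>z. z \<in> {-c<..<c} \<Longrightarrow> W (- z) = W z"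
    and W': "\<And>z. z \<in> {-c<..<c} \<Longrightarrow> (W has_real_derivative W' z) (at z)"
    and z: "z \<in> {-c<..<c}"
  shows "W' (- z) = - W' z"
proof -
  have "((\<lambda>x. W (- x)) has_real_derivative W' (- z) * - 1) (at z)"
    using z by (intro DERIV_chain2[OF W'] DERIV_minus DERIV_ident) auto
  then have "((\<lambda>x. W (- x)) has_real_derivative - W' (- z)) (at z)"
    by simp
  then have "(W has_real_derivative - W' (- z)) (at z)"
    by (rule has_field_derivative_transform_within_open[where S="{-c<..<c}"])
       (use z even in auto)
  then show ?thesis
    using W'[OF z] by (metis DERIV_unique minus_minus)
qed

lemma continuous_on_integral_param_Icc:
  fixes f :: "real \<times> real \<Rightarrow> real"
  assumes "continuous_on (A \<times> {a..b}) f"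
  shows "continuous_on A (\<lambda>x. integral {a..b} (\<lambda>t. f (x, t)))"
  using integral_continuous_on_param[of A a b "\<lambda>x t. f (x, t)"] assms
  by (simp add: cbox_interval)

lemma integrable_on_Icc_times_Icc:
  fixes f :: "real \<times> real \<Rightarrow> real"
  assumes "continuous_on ({a..b} \<times> {c..d}) f"
  shows "f integrable_on {a..b} \<times> {c..d}"
  using integrable_continuous[of "(a, c)" "(b, d)" f, unfolded cbox_Pair_eq, unfolded cbox_interval] assms
  by simp

lemma iterated_integral_eq_integral_Icc_times_Icc:
  fixes f :: "real \<times> real \<Rightarrow> real"
  assumes "continuous_on ({a..b} \<times> {c..d}) f"
  shows "integral {a..b} (\<lambda>x. integral {c..d} (\<lambda>y. f (x, y))) = integral ({a..b} \<times> {c..d}) f"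
  using integral_prod_continuous[of a c b d f, unfolded cbox_Pair_eq, unfolded cbox_interval] assms
  by simp

lemma integral_Icc_times_Icc_swap:
  fixes f :: "real \<times> real \<Rightarrow> real"
  assumes "continuous_on ({a..b} \<times> {a..b}) f"
  shows "integral ({a..b} \<times> {a..b}) (\<lambda>z. f (prod.swap z)) = integral ({a..b} \<times> {a..b}) f"
  using integral_swap_2dim[of a a b b "\<lambda>x y. f (x, y)", unfolded cbox_Pair_eq, unfolded cbox_interval] assms
  by (simp add: case_prod_beta' prod.swap_def)

lemma iterated_integral_symmetrize:
  fixes F G A :: "real \<times> real \<Rightarrow> real"
  defines "S \<equiv> {0..1} \<times> {0..1}"
  assumes F: "continuous_on S F" and G: "continuous_on S G" and A: "continuous_on S A"
  shows "integral {0..1} (\<lambda>s. integral {0..1} (\<lambda>t. F (s, t) - G (s, t) - (A (s, t) + A (t, s))))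
    = integral {0..1} (\<lambda>s. integral {0..1} (\<lambda>t. F (s, t)))
      - integral {0..1} (\<lambda>s. integral {0..1} (\<lambda>t. G (s, t)))
      - 2 * integral {0..1} (\<lambda>s. integral {0..1} (\<lambda>t. A (s, t)))"
proof -
  have A_swap: "continuous_on S (\<lambda>z. A (prod.swap z))"
    by (rule continuous_on_compose2[OF A continuous_on_swap]) (auto simp: S_def)
  have "continuous_on S (\<lambda>z. F z - G z - (A z + A (prod.swap z)))"
    by (intro continuous_intros F G A A_swap)
  from iterated_integral_eq_integral_Icc_times_Icc[OF this[unfolded S_def]]
  have "integral {0..1} (\<lambda>s. integral {0..1} (\<lambda>t. F (s, t) - G (s, t) - (A (s, t) + A (t, s))))
      = integral S (\<lambda>z. F z - G z - (A z + A (prod.swap z)))"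
    by (simp add: S_def)
  also have "\<dots> = integral S F - integral S G - 2 * integral S A"
    using integrable_on_Icc_times_Icc F G A A_swap integral_Icc_times_Icc_swap[OF A[unfolded S_def]]
    by (simp add: S_def integral_diff integral_add integrable_diff integrable_add)
  finally show ?thesis
    using iterated_integral_eq_integral_Icc_times_Icc F G A by (simp add: S_def)
qed

lemma continuous_on_unit_square_diff:
  fixes W u v :: "real \<Rightarrow> real"
  assumes W: "continuous_on {-1..1} W"
    and u: "continuous_on {0..1} u" "u ` {0..1} \<subseteq> {0..1}"
    and v: "continuous_on {0..1} v" "v ` {0..1} \<subseteq> {0..1}"
  shows "continuous_on ({0..1} \<times> {0..1}) (\<lambda>z. W (u (fst z) - v (snd z)))"
proof (rule continuous_on_compose2[OF W])
  show "continuous_on ({0..1} \<times> {0..1}) (\<lambda>z. u (fst z) - v (snd z))"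
    by (intro continuous_on_diff continuous_on_compose2[OF u(1) continuous_on_fst]
        continuous_on_compose2[OF v(1) continuous_on_snd]) auto
  show "(\<lambda>z. u (fst z) - v (snd z)) ` ({0..1} \<times> {0..1}) \<subseteq> {-1..1}"
    using u(2) v(2) by force
qed

definition positive_continuous_density :: "(real \<Rightarrow> real) \<Rightarrow> bool" where
  "positive_continuous_density p \<longleftrightarrow>
     continuous_on {0..1} p \<and> (\<forall>x\<in>{0..1}. 0 < p x) \<and> integral {0..1} p = 1"

lemma smooth_pos_density_imp_positive_continuous_density:
  assumes "smooth_pos_density p"
  shows "positive_continuous_density p"
proof -
  obtain p' where "\<And>x. x \<in> {0..1} \<Longrightarrow> (p has_real_derivative p' x) (at x within {0..1})"
    using assms unfolding smooth_pos_density_def by (metis smooth_on_imp_C1)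
  then have "continuous_on {0..1} p" by (rule DERIV_continuous_on)
  with assms show ?thesis
    by (simp add: smooth_pos_density_def positive_continuous_density_def)
qed

context
  fixes p :: "real \<Rightarrow> real"
  assumes p: "positive_continuous_density p"
begin

lemma continuous_on_density: "continuous_on {0..1} p"
  using p by (simp add: positive_continuous_density_def)

lemma density_pos: "x \<in> {0..1} \<Longrightarrow> 0 < p x"
  using p by (simp add: positive_continuous_density_def)

lemma continuous_on_inverse_density: "continuous_on {0..1} (\<lambda>x. 1 / p x)"
  using continuous_on_density density_pos by (intro continuous_intros) force+

lemma cdf_has_real_derivative:
  "x \<in> {0..1} \<Longrightarrow> (cdf p has_real_derivative p x) (at x within {0..1})"
  unfolding cdf_def[abs_def] by (rule integral_has_real_derivative[OF continuous_on_density])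

lemma continuous_on_cdf: "continuous_on {0..1} (cdf p)"
  using cdf_has_real_derivative by (rule DERIV_continuous_on)

lemma cdf_0: "cdf p 0 = 0"
  by (simp add: cdf_def)

lemma cdf_1: "cdf p 1 = 1"
  using p by (simp add: cdf_def positive_continuous_density_def)

lemma strict_mono_on_cdf: "strict_mono_on {0..1} (cdf p)"
proof (rule strict_mono_onI)
  fix a b :: real
  assume ab: "a \<in> {0..1}" "b \<in> {0..1}" "a < b"
  show "cdf p a < cdf p b"
  proof (rule DERIV_pos_imp_increasing_open[OF \<open>a < b\<close>])
    fix x assume "a < x" "x < b"
    with ab have "x \<in> {0<..<1}" by auto
    then show "\<exists>y. (cdf p has_real_derivative y) (at x) \<and> 0 < y"
      by (intro exI[of _ "p x"] conjI has_real_derivative_Icc_interior[OF cdf_has_real_derivative]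
          density_pos) auto
  next
    show "continuous_on {a..b} (cdf p)"
      using ab by (intro continuous_on_subset[OF continuous_on_cdf]) auto
  qed
qed

lemma inj_on_cdf: "inj_on (cdf p) {0..1}"
  using strict_mono_on_cdf by (rule strict_mono_on_imp_inj_on)

lemma cdf_image: "cdf p ` {0..1} = {0..1}"
proof
  show "cdf p ` {0..1} \<subseteq> {0..1}"
    using strict_mono_on_leD[OF strict_mono_on_cdf, of 0] strict_mono_on_leD[OF strict_mono_on_cdf, of _ 1]
    by (force simp: cdf_0 cdf_1)
  show "{0..1} \<subseteq> cdf p ` {0..1}"
  proof
    fix y :: real assume "y \<in> {0..1}"
    then obtain x where "0 \<le> x" "x \<le> 1" "cdf p x = y"
      using IVT'[of "cdf p" 0 y 1] continuous_on_cdf by (auto simp: cdf_0 cdf_1)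
    then show "y \<in> cdf p ` {0..1}" by auto
  qed
qed

lemma cdf_in_interior: "x \<in> {0<..<1} \<Longrightarrow> cdf p x \<in> {0<..<1}"
  using strict_mono_onD[OF strict_mono_on_cdf, of 0 x] strict_mono_onD[OF strict_mono_on_cdf, of x 1]
  by (auto simp: cdf_0 cdf_1)

lemma inv_cdf_in: "s \<in> {0..1} \<Longrightarrow> inv_cdf p s \<in> {0..1}"
  unfolding inv_cdf_def by (metis cdf_image the_inv_into_into inj_on_cdf order_refl)

lemma cdf_inv_cdf: "s \<in> {0..1} \<Longrightarrow> cdf p (inv_cdf p s) = s"
  unfolding inv_cdf_def by (metis cdf_image f_the_inv_into_f inj_on_cdf)

lemma inv_cdf_cdf: "x \<in> {0..1} \<Longrightarrow> inv_cdf p (cdf p x) = x"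
  unfolding inv_cdf_def using inj_on_cdf by (rule the_inv_into_f_f)

lemma inv_cdf_in_interior:
  assumes "s \<in> {0<..<1}"
  shows "inv_cdf p s \<in> {0<..<1}"
proof -
  have s: "s \<in> {0..1}" using assms by auto
  have "inv_cdf p s \<in> {0..1}" "cdf p (inv_cdf p s) \<noteq> 0" "cdf p (inv_cdf p s) \<noteq> 1"
    using inv_cdf_in[OF s] cdf_inv_cdf[OF s] assms by auto
  then show ?thesis
    by (metis cdf_0 cdf_1 atLeastAtMost_iff greaterThanLessThan_iff order_less_le)
qed

lemma continuous_on_inv_cdf: "continuous_on {0..1} (inv_cdf p)"
  using continuous_on_inv[OF continuous_on_cdf compact_Icc, of "inv_cdf p"]
  by (simp add: inv_cdf_cdf cdf_image)

lemma inv_cdf_image_subset: "inv_cdf p ` {0..1} \<subseteq> {0..1}"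
  using inv_cdf_in by blast

lemma continuous_on_compose_inv_cdf:
  assumes "continuous_on {0..1} h"
  shows "continuous_on {0..1} (\<lambda>s. h (inv_cdf p s))"
  by (rule continuous_on_compose2[OF assms continuous_on_inv_cdf]) (fact inv_cdf_image_subset)

lemma integral_mult_density_inv_cdf:
  assumes h: "continuous_on {0..1} h"
  shows "integral {0..1} (\<lambda>x. h x * p x) = integral {0..1} (\<lambda>s. h (inv_cdf p s))"
proof -
  have "((\<lambda>x. p x *\<^sub>R h (inv_cdf p (cdf p x))) has_integral
          integral {cdf p 0..cdf p 1} (\<lambda>s. h (inv_cdf p s))) {0..1}"
    by (rule has_integral_substitution[where c=0 and d=1])
       (use cdf_has_real_derivative cdf_image continuous_on_compose_inv_cdf[OF h] in
        \<open>auto simp: cdf_0 cdf_1\<close>)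
  then have "((\<lambda>x. h x * p x) has_integral integral {cdf p 0..cdf p 1} (\<lambda>s. h (inv_cdf p s))) {0..1}"
    by (rule has_integral_eq[rotated]) (simp add: inv_cdf_cdf)
  then show ?thesis by (simp add: integral_unique cdf_0 cdf_1)
qed

lemma inv_cdf_has_real_derivative:
  assumes s: "s \<in> {0<..<1}"
  shows "(inv_cdf p has_real_derivative 1 / p (inv_cdf p s)) (at s)"
proof -
  have "(inv_cdf p has_real_derivative inverse (p (inv_cdf p s))) (at s)"
  proof (rule DERIV_inverse_function[where f="cdf p" and a=0 and b=1])
    have "inv_cdf p s \<in> {0<..<1}" using s by (rule inv_cdf_in_interior)
    then show "(cdf p has_real_derivative p (inv_cdf p s)) (at (inv_cdf p s))"
      and "p (inv_cdf p s) \<noteq> 0"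
      using has_real_derivative_Icc_interior[OF cdf_has_real_derivative] density_pos[of "inv_cdf p s"]
      by auto
    show "cdf p (inv_cdf p y) = y" if "0 < y" "y < 1" for y
      using that by (simp add: cdf_inv_cdf)
    show "isCont (inv_cdf p) s"
      using continuous_on_interior[OF continuous_on_inv_cdf] s by auto
  qed (use s in auto)
  then show ?thesis by (simp add: divide_inverse)
qed

end

context
  fixes p q :: "real \<Rightarrow> real"
  assumes p: "positive_continuous_density p" and q: "positive_continuous_density q"
begin

lemma ot_map_in: "x \<in> {0..1} \<Longrightarrow> ot_map p q x \<in> {0..1}"
  unfolding ot_map_def using cdf_image[OF q] by (intro inv_cdf_in[OF p]) auto

lemma ot_map_inv_cdf: "s \<in> {0..1} \<Longrightarrow> ot_map p q (inv_cdf q s) = inv_cdf p s"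
  by (simp add: ot_map_def cdf_inv_cdf[OF q])

lemma ot_map_0: "ot_map p q 0 = 0"
  using inv_cdf_cdf[OF p, of 0] by (simp add: ot_map_def cdf_0 p q)

lemma ot_map_1: "ot_map p q 1 = 1"
  using inv_cdf_cdf[OF p, of 1] by (simp add: ot_map_def cdf_1 p q)

lemma continuous_on_ot_map: "continuous_on {0..1} (ot_map p q)"
  unfolding ot_map_def[abs_def]
  by (rule continuous_on_compose2[OF continuous_on_inv_cdf[OF p] continuous_on_cdf[OF q]])
     (use cdf_image[OF q] in auto)

lemma ot_map_has_real_derivative:
  assumes x: "x \<in> {0<..<1}"
  shows "(ot_map p q has_real_derivative q x / p (ot_map p q x)) (at x)"
proof -
  have "(cdf q has_real_derivative q x) (at x)"
    using x by (intro has_real_derivative_Icc_interior[OF cdf_has_real_derivative[OF q]]) auto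
  from DERIV_chain2[OF inv_cdf_has_real_derivative[OF p cdf_in_interior[OF q x]] this]
  show ?thesis by (simp add: ot_map_def[abs_def])
qed

lemma integral_ot_map_displacement:
  assumes g: "continuous_on {0..1} g"
  shows "integral {0..1} (\<lambda>x. g x * (ot_map p q x - x) * q x)
       = integral {0..1} (\<lambda>s. g (inv_cdf q s) * (inv_cdf p s - inv_cdf q s))"
proof -
  have "integral {0..1} (\<lambda>x. g x * (ot_map p q x - x) * q x)
      = integral {0..1} (\<lambda>s. g (inv_cdf q s) * (ot_map p q (inv_cdf q s) - inv_cdf q s))"
    by (rule integral_mult_density_inv_cdf[OF q])
       (intro continuous_intros g continuous_on_ot_map)
  also have "\<dots> = integral {0..1} (\<lambda>s. g (inv_cdf q s) * (inv_cdf p s - inv_cdf q s))"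
    by (rule integral_cong) (simp add: ot_map_inv_cdf)
  finally show ?thesis .
qed

lemma integral_deriv_mult_ot_map_displacement:
  assumes P: "continuous_on {0..1} P" "continuous_on {0..1} P'"
    and P': "\<And>x. x \<in> {0<..<1} \<Longrightarrow> (P has_real_derivative P' x) (at x)"
  shows "integral {0..1} (\<lambda>x. P' x * (ot_map p q x - x))
       = integral {0..1} (\<lambda>s. P (inv_cdf q s) * (1 / q (inv_cdf q s) - 1 / p (inv_cdf p s)))"
proof -
  let ?T = "ot_map p q"
  define D where "D x = q x / p (?T x) - 1" for x
  have pT_pos: "0 < p (?T x)" if "x \<in> {0..1}" for x
    using density_pos[OF p ot_map_in[OF that]] .
  have pT: "continuous_on {0..1} (\<lambda>x. p (?T x))"
    by (rule continuous_on_compose2[OF continuous_on_density[OF p] continuous_on_ot_map])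
       (use ot_map_in in blast)
  have "integral {0..1} (\<lambda>x. P' x * (?T x - x)) = - integral {0..1} (\<lambda>x. P x * D x)"
  proof (rule integral_by_parts_vanishing)
    show "continuous_on {0..1} (\<lambda>x. ?T x - x)"
      by (intro continuous_intros continuous_on_ot_map)
    show "continuous_on {0..1} D"
      unfolding D_def using pT_pos by (intro continuous_intros continuous_on_density[OF q] pT) force
    show "((\<lambda>x. ?T x - x) has_real_derivative D x) (at x)" if "x \<in> {0<..<1}" for x
      unfolding D_def using ot_map_has_real_derivative[OF that] by (intro DERIV_diff DERIV_ident)
  qed (simp_all add: P P' ot_map_0 ot_map_1)
  also have "\<dots> = integral {0..1} (\<lambda>x. P x * (1 / q x - 1 / p (?T x)) * q x)"
    unfolding integral_neg[symmetric]
  proof (rule integral_cong)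
    fix x :: real assume "x \<in> {0..1}"
    with density_pos[OF q] pT_pos have "q x \<noteq> 0" "p (?T x) \<noteq> 0" by (metis less_irrefl)+
    then show "- (P x * D x) = P x * (1 / q x - 1 / p (?T x)) * q x"
      by (simp add: D_def field_simps)
  qed
  also have "\<dots> = integral {0..1} (\<lambda>s. P (inv_cdf q s) * (1 / q (inv_cdf q s) - 1 / p (?T (inv_cdf q s))))"
    using density_pos[OF q] pT_pos
    by (intro integral_mult_density_inv_cdf[OF q] continuous_intros P continuous_on_density[OF q] pT)
       force+
  also have "\<dots> = integral {0..1} (\<lambda>s. P (inv_cdf q s) * (1 / q (inv_cdf q s) - 1 / p (inv_cdf p s)))"
    by (rule integral_cong) (simp only: ot_map_inv_cdf)
  finally show ?thesis .
qed

end

definition transport_linearization ::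
  "((real \<Rightarrow> real) \<Rightarrow> real \<Rightarrow> real) \<Rightarrow> (real \<Rightarrow> real) \<Rightarrow> (real \<Rightarrow> real) \<Rightarrow> real" where
  "transport_linearization dF p q =
     integral {0..1} (\<lambda>x. deriv (dF q) x * (ot_map p q x - x) * q x)"

lemma transport_bregman_eq:
  "transport_bregman F dF p q = F p - F q - transport_linearization dF p q"
  by (simp add: transport_bregman_def transport_linearization_def)

lemma potential_energy_inv_cdf:
  assumes "positive_continuous_density p" and "continuous_on {0..1} V"
  shows "potential_energy V p = integral {0..1} (\<lambda>s. V (inv_cdf p s))"
  unfolding potential_energy_def by (rule integral_mult_density_inv_cdf[OF assms])

lemma transport_linearization_potential:
  assumes p: "positive_continuous_density p" and q: "positive_continuous_density q"
    and V': "\<And>x. x \<in> {0..1} \<Longrightarrow> (V has_real_derivative V' x) (at x within {0..1})"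
      "continuous_on {0..1} V'"
  shows "transport_linearization (potential_fv V) p q =
           integral {0..1} (\<lambda>s. V' (inv_cdf q s) * (inv_cdf p s - inv_cdf q s))"
proof -
  have "transport_linearization (potential_fv V) p q
      = integral {0..1} (\<lambda>x. V' x * (ot_map p q x - x) * q x)"
    unfolding transport_linearization_def potential_fv_def[abs_def]
  proof (rule integral_cong_interior)
    fix x :: real assume "x \<in> {0<..<1}"
    from deriv_Icc_interior[OF V'(1) this]
    show "deriv (\<lambda>x. V x) x * (ot_map p q x - x) * q x = V' x * (ot_map p q x - x) * q x"
      by simp
  qed
  also have "\<dots> = integral {0..1} (\<lambda>s. V' (inv_cdf q s) * (inv_cdf p s - inv_cdf q s))"
    by (rule integral_ot_map_displacement[OF p q V'(2)])
  finally show ?thesis .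
qed

lemma transport_bregman_potential_energy:
  assumes p: "positive_continuous_density p" and q: "positive_continuous_density q"
    and V': "\<And>x. x \<in> {0..1} \<Longrightarrow> (V has_real_derivative V' x) (at x within {0..1})"
      "continuous_on {0..1} V'"
  shows "transport_bregman (potential_energy V) (potential_fv V) p q =
           integral {0..1} (\<lambda>s. bregman V (inv_cdf p s) (inv_cdf q s))"
proof -
  have V: "continuous_on {0..1} V"
    using V'(1) by (rule DERIV_continuous_on)
  have "transport_bregman (potential_energy V) (potential_fv V) p q
      = integral {0..1} (\<lambda>s. V (inv_cdf p s)) - integral {0..1} (\<lambda>s. V (inv_cdf q s))
        - integral {0..1} (\<lambda>s. V' (inv_cdf q s) * (inv_cdf p s - inv_cdf q s))"
    using transport_linearization_potential[OF p q V']
    by (simp add: transport_bregman_eq potential_energy_inv_cdf[OF p V] potential_energy_inv_cdf[OF q V])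
  also have "\<dots> = integral {0..1} (\<lambda>s. V (inv_cdf p s) - V (inv_cdf q s)
                    - V' (inv_cdf q s) * (inv_cdf p s - inv_cdf q s))"
    by (simp add: integral_diff integrable_diff integrable_continuous_real continuous_intros
        continuous_on_compose_inv_cdf continuous_on_inv_cdf V V'(2) p q)
  also have "\<dots> = integral {0..1} (\<lambda>s. bregman V (inv_cdf p s) (inv_cdf q s))"
  proof (rule integral_cong_interior)
    fix s :: real assume "s \<in> {0<..<1}"
    from deriv_Icc_interior[OF V'(1) inv_cdf_in_interior[OF q this]]
    show "V (inv_cdf p s) - V (inv_cdf q s) - V' (inv_cdf q s) * (inv_cdf p s - inv_cdf q s)
        = bregman V (inv_cdf p s) (inv_cdf q s)"
      by (simp add: bregman_def)
  qed
  finally show ?thesis .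
qed

lemma interaction_energy_inv_cdf:
  assumes p: "positive_continuous_density p" and W: "continuous_on {-1..1} W"
  shows "interaction_energy W p =
    1/2 * integral {0..1} (\<lambda>s. integral {0..1} (\<lambda>t. W (inv_cdf p s - inv_cdf p t)))"
proof -
  define G where "G x = integral {0..1} (\<lambda>t. W (x - inv_cdf p t))" for x
  have "continuous_on ({0..1} \<times> {0..1}) (\<lambda>z. W (fst z - inv_cdf p (snd z)))"
    using continuous_on_unit_square_diff[OF W continuous_on_id _ continuous_on_inv_cdf[OF p]
        inv_cdf_image_subset[OF p]] by simp
  from continuous_on_integral_param_Icc[OF this]
  have G: "continuous_on {0..1} G" by (simp add: G_def)
  have inner: "integral {0..1} (\<lambda>y. W (x - y) * p x * p y) = G x * p x"
    if x: "x \<in> {0..1}" for x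
  proof -
    have "continuous_on {0..1} (\<lambda>y. W (x - y))"
      by (rule continuous_on_compose2[OF W]) (use x in \<open>auto intro!: continuous_intros\<close>)
    then have "integral {0..1} (\<lambda>y. p x * W (x - y) * p y)
        = integral {0..1} (\<lambda>t. p x * W (x - inv_cdf p t))"
      by (intro integral_mult_density_inv_cdf[OF p] continuous_intros)
    then show ?thesis by (simp add: G_def mult_ac)
  qed
  have "integral {0..1} (\<lambda>x. integral {0..1} (\<lambda>y. W (x - y) * p x * p y))
      = integral {0..1} (\<lambda>x. G x * p x)"
    by (rule integral_cong) (rule inner)
  then have "interaction_energy W p = 1/2 * integral {0..1} (\<lambda>x. G x * p x)"
    by (simp add: interaction_energy_def)
  also have "integral {0..1} (\<lambda>x. G x * p x) = integral {0..1} (\<lambda>s. G (inv_cdf p s))"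
    by (rule integral_mult_density_inv_cdf[OF p G])
  finally show ?thesis by (simp add: G_def)
qed

lemma deriv_interaction_fv:
  assumes W': "\<And>z. z \<in> {-1..1} \<Longrightarrow> (W has_real_derivative W' z) (at z within {-1..1})"
      "continuous_on {-1..1} W'"
    and q: "continuous_on {0..1} q" and x: "x \<in> {0<..<1}"
  shows "deriv (interaction_fv W q) x = integral {0..1} (\<lambda>t. W' (x - t) * q t)"
proof -
  have W: "continuous_on {-1..1} W"
    by (rule DERIV_continuous_on[OF W'(1)])
  have "((\<lambda>x. integral (cbox 0 1) (\<lambda>t. W (x - t) * q t)) has_real_derivative
          integral (cbox 0 1) (\<lambda>t. W' (x - t) * q t)) (at x within {0<..<1})"
  proof (rule leibniz_rule_field_derivative)
    fix y t :: real
    assume "y \<in> {0<..<1}" "t \<in> cbox 0 1"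
    then have "y - t \<in> {-1<..<1}" by auto
    then have "(W has_real_derivative W' (y - t)) (at (y - t))"
      using W'(1)[of "y - t"] by (simp add: at_within_Icc_at)
    from DERIV_chain2[OF this DERIV_diff[OF DERIV_ident DERIV_const[of t]]]
    have "((\<lambda>x. W (x - t)) has_real_derivative W' (y - t)) (at y)" by simp
    then show "((\<lambda>x. W (x - t) * q t) has_real_derivative W' (y - t) * q t) (at y within {0<..<1})"
      by (rule has_field_derivative_at_within[OF DERIV_cmult_right])
  next
    fix y :: real
    assume "y \<in> {0<..<1}"
    then have "continuous_on {0..1} (\<lambda>t. W (y - t))"
      by (intro continuous_on_compose2[OF W] continuous_intros) auto
    then show "(\<lambda>t. W (y - t) * q t) integrable_on cbox 0 1"
      by (simp add: integrable_continuous_real continuous_intros q)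
  next
    have "continuous_on ({0..1} \<times> {0..1}) (\<lambda>z. W' (fst z - snd z) * q (snd z))"
    proof (rule continuous_on_mult)
      show "continuous_on ({0..1} \<times> {0..1}) (\<lambda>z. W' (fst z - snd z))"
        using continuous_on_unit_square_diff[OF W'(2) continuous_on_id _ continuous_on_id] by simp
      show "continuous_on ({0..1} \<times> {0..1}) (\<lambda>z. q (snd z))"
        by (rule continuous_on_compose2[OF q continuous_on_snd]) auto
    qed
    then show "continuous_on ({0<..<1} \<times> cbox 0 1) (\<lambda>(x, t). W' (x - t) * q t)"
      by (rule continuous_on_subset[THEN continuous_on_eq])
         (auto simp: split_beta)
  qed (use x in \<open>auto simp: convex_real_interval\<close>)
  moreover have "interaction_fv W q = (\<lambda>x. integral (cbox 0 1) (\<lambda>t. W (x - t) * q t))"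
    by (simp add: interaction_fv_def[abs_def] cbox_interval)
  ultimately have "(interaction_fv W q has_real_derivative integral {0..1} (\<lambda>t. W' (x - t) * q t)) (at x)"
    by (simp add: at_within_open[OF x open_greaterThanLessThan] cbox_interval)
  then show ?thesis by (rule DERIV_imp_deriv)
qed

lemma transport_linearization_interaction:
  assumes p: "positive_continuous_density p" and q: "positive_continuous_density q"
    and W': "\<And>z. z \<in> {-1..1} \<Longrightarrow> (W has_real_derivative W' z) (at z within {-1..1})"
      "continuous_on {-1..1} W'"
  shows "transport_linearization (interaction_fv W) p q =
    integral {0..1} (\<lambda>s. integral {0..1} (\<lambda>t.
      W' (inv_cdf q s - inv_cdf q t) * (inv_cdf p s - inv_cdf q s)))"
proof -
  define K where "K x = integral {0..1} (\<lambda>t. W' (x - inv_cdf q t))" for x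
  have "continuous_on ({0..1} \<times> {0..1}) (\<lambda>z. W' (fst z - inv_cdf q (snd z)))"
    using continuous_on_unit_square_diff[OF W'(2) continuous_on_id _ continuous_on_inv_cdf[OF q]
        inv_cdf_image_subset[OF q]] by simp
  from continuous_on_integral_param_Icc[OF this]
  have K: "continuous_on {0..1} K" by (simp add: K_def)
  have deriv_fv: "deriv (interaction_fv W q) x = K x" if x: "x \<in> {0<..<1}" for x
  proof -
    have "continuous_on {0..1} (\<lambda>t. W' (x - t))"
      using x by (intro continuous_on_compose2[OF W'(2)] continuous_intros) auto
    from integral_mult_density_inv_cdf[OF q this]
    show ?thesis
      using deriv_interaction_fv[OF W' continuous_on_density[OF q] x]
      by (simp add: K_def)
  qed
  have "transport_linearization (interaction_fv W) p q
      = integral {0..1} (\<lambda>x. K x * (ot_map p q x - x) * q x)"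
    unfolding transport_linearization_def
  proof (rule integral_cong_interior)
    fix x :: real assume "x \<in> {0<..<1}"
    then show "deriv (interaction_fv W q) x * (ot_map p q x - x) * q x
             = K x * (ot_map p q x - x) * q x"
      by (simp only: deriv_fv)
  qed
  also have "\<dots> = integral {0..1} (\<lambda>s. K (inv_cdf q s) * (inv_cdf p s - inv_cdf q s))"
    by (rule integral_ot_map_displacement[OF p q K])
  finally show ?thesis by (simp add: K_def)
qed

lemma bregman_even_differences:
  fixes W W' :: "real \<Rightarrow> real"
  assumes even: "\<And>z. z \<in> {-1<..<1} \<Longrightarrow> W (- z) = W z"
    and W': "\<And>z. z \<in> {-1<..<1} \<Longrightarrow> (W has_real_derivative W' z) (at z)"
    and cd: "c - d \<in> {-1<..<1}"
  shows "bregman W (a - b) (c - d) =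
    W (a - b) - W (c - d) - (W' (c - d) * (a - c) + W' (d - c) * (b - d))"
proof -
  have "W' (d - c) = - W' (c - d)"
    using derivative_of_even_is_odd[OF even W' cd] by simp
  then show ?thesis
    by (simp add: bregman_def DERIV_imp_deriv[OF W'[OF cd]] algebra_simps)
qed

text \<open>Swapping s and t turns the two linear terms of the Bregman integrand into the
  same one, because W' is odd; hence the factor 2.\<close>
lemma integral_bregman_even_differences:
  fixes u v W W' :: "real \<Rightarrow> real"
  assumes W': "\<And>z. z \<in> {-1..1} \<Longrightarrow> (W has_real_derivative W' z) (at z within {-1..1})"
      "continuous_on {-1..1} W'"
    and even: "\<And>z. z \<in> {-1..1} \<Longrightarrow> W (- z) = W z"
    and u: "continuous_on {0..1} u" "u ` {0..1} \<subseteq> {0..1}"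
    and v: "continuous_on {0..1} v" "v ` {0..1} \<subseteq> {0..1}" "v ` {0<..<1} \<subseteq> {0<..<1}"
  shows "integral {0..1} (\<lambda>s. integral {0..1} (\<lambda>t. bregman W (u s - u t) (v s - v t)))
    = integral {0..1} (\<lambda>s. integral {0..1} (\<lambda>t. W (u s - u t)))
      - integral {0..1} (\<lambda>s. integral {0..1} (\<lambda>t. W (v s - v t)))
      - 2 * integral {0..1} (\<lambda>s. integral {0..1} (\<lambda>t. W' (v s - v t) * (u s - v s)))"
proof -
  define F G A :: "real \<times> real \<Rightarrow> real"
    where "F z = W (u (fst z) - u (snd z))" and "G z = W (v (fst z) - v (snd z))"
      and "A z = W' (v (fst z) - v (snd z)) * (u (fst z) - v (fst z))" for z
  let ?S = "{0..1::real} \<times> {0..1::real}"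
  have W: "continuous_on {-1..1} W"
    by (rule DERIV_continuous_on[OF W'(1)])
  have F: "continuous_on ?S F"
    unfolding F_def by (rule continuous_on_unit_square_diff[OF W u u])
  have G: "continuous_on ?S G"
    unfolding G_def by (rule continuous_on_unit_square_diff[OF W v(1,2) v(1,2)])
  have A: "continuous_on ?S A"
    unfolding A_def
    by (intro continuous_on_mult continuous_on_unit_square_diff[OF W'(2) v(1,2) v(1,2)]
        continuous_on_diff continuous_on_compose2[OF u(1) continuous_on_fst]
        continuous_on_compose2[OF v(1) continuous_on_fst]) auto
  have "integral {0..1} (\<lambda>s. integral {0..1} (\<lambda>t. bregman W (u s - u t) (v s - v t)))
      = integral {0..1} (\<lambda>s. integral {0..1} (\<lambda>t. F (s, t) - G (s, t) - (A (s, t) + A (t, s))))"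
  proof (rule integral_cong_interior, rule integral_cong)
    fix s t :: real
    assume "s \<in> {0<..<1}" and "t \<in> {0..1}"
    with v(2,3) have cd: "v s - v t \<in> {-1<..<1}" by force
    have W'_at: "(W has_real_derivative W' z) (at z)" if "z \<in> {-1<..<1}" for z
      using W'(1)[of z] that by (simp add: at_within_Icc_at)
    have "W (- z) = W z" if "z \<in> {-1<..<1}" for z
      using even that by simp
    from bregman_even_differences[OF this W'_at cd]
    show "bregman W (u s - u t) (v s - v t) = F (s, t) - G (s, t) - (A (s, t) + A (t, s))"
      by (simp add: F_def G_def A_def)
  qed
  also have "\<dots> = integral {0..1} (\<lambda>s. integral {0..1} (\<lambda>t. F (s, t)))
      - integral {0..1} (\<lambda>s. integral {0..1} (\<lambda>t. G (s, t)))
      - 2 * integral {0..1} (\<lambda>s. integral {0..1} (\<lambda>t. A (s, t)))"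
    by (rule iterated_integral_symmetrize[OF F G A])
  finally show ?thesis
    by (simp add: F_def G_def A_def)
qed

lemma transport_bregman_interaction_energy:
  assumes p: "positive_continuous_density p" and q: "positive_continuous_density q"
    and W': "\<And>z. z \<in> {-1..1} \<Longrightarrow> (W has_real_derivative W' z) (at z within {-1..1})"
      "continuous_on {-1..1} W'"
    and even: "\<And>z. z \<in> {-1..1} \<Longrightarrow> W (- z) = W z"
  shows "transport_bregman (interaction_energy W) (interaction_fv W) p q =
    1/2 * integral {0..1} (\<lambda>s. integral {0..1} (\<lambda>t.
      bregman W (inv_cdf p s - inv_cdf p t) (inv_cdf q s - inv_cdf q t)))"
proof -
  have W: "continuous_on {-1..1} W"
    by (rule DERIV_continuous_on[OF W'(1)])
  have "inv_cdf q ` {0<..<1} \<subseteq> {0<..<1}"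
    using inv_cdf_in_interior[OF q] by blast
  from integral_bregman_even_differences[OF W' even continuous_on_inv_cdf[OF p]
      inv_cdf_image_subset[OF p] continuous_on_inv_cdf[OF q] inv_cdf_image_subset[OF q] this]
  show ?thesis
    using interaction_energy_inv_cdf[OF p W] interaction_energy_inv_cdf[OF q W]
      transport_linearization_interaction[OF p q W']
    by (simp add: transport_bregman_eq)
qed

lemma continuous_on_compose_density:
  assumes p: "positive_continuous_density p" and U: "continuous_on {0<..} U"
  shows "continuous_on {0..1} (\<lambda>x. U (p x))"
  by (rule continuous_on_compose2[OF U continuous_on_density[OF p]])
     (use density_pos[OF p] in force)

lemma continuous_on_compose_density_divide:
  assumes p: "positive_continuous_density p" and U: "continuous_on {0<..} U"
  shows "continuous_on {0..1} (\<lambda>x. U (p x) / p x)"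
  using continuous_on_compose_density[OF p U] continuous_on_density[OF p] density_pos[OF p]
  by (intro continuous_on_divide) force+

lemma internal_energy_inv_cdf:
  assumes p: "positive_continuous_density p" and U: "continuous_on {0<..} U"
  shows "internal_energy U p = integral {0..1} (\<lambda>s. U (p (inv_cdf p s)) / p (inv_cdf p s))"
proof -
  from integral_mult_density_inv_cdf[OF p continuous_on_compose_density_divide[OF p U]]
  have "integral {0..1} (\<lambda>x. U (p x) / p x * p x)
      = integral {0..1} (\<lambda>s. U (p (inv_cdf p s)) / p (inv_cdf p s))" .
  moreover have "integral {0..1} (\<lambda>x. U (p x) / p x * p x) = internal_energy U p"
    unfolding internal_energy_def
    by (rule integral_cong) (use density_pos[OF p] in force)
  ultimately show ?thesis by simp
qed

lemma deriv_perspective: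
  fixes U :: "real \<Rightarrow> real"
  assumes a: "0 < a" and U': "(U has_real_derivative U') (at a)"
  shows "deriv (\<lambda>z. z * U (1 / z)) (1 / a) = U a - U' * a"
proof -
  have inv: "((\<lambda>z. 1 / z) has_real_derivative - (a * a)) (at (1 / a))"
    using DERIV_inverse[of "1 / a"] a by (simp add: divide_inverse power2_eq_square)
  have "(U has_real_derivative U') (at (1 / (1 / a)))"
    using U' by simp
  from DERIV_chain2[OF this inv]
  have "((\<lambda>z. U (1 / z)) has_real_derivative U' * - (a * a)) (at (1 / a))" .
  from DERIV_mult[OF DERIV_ident this]
  have "((\<lambda>z. z * U (1 / z)) has_real_derivative U a - U' * a) (at (1 / a))"
    by (rule DERIV_cong) (use a in \<open>simp add: field_simps\<close>)
  then show ?thesis by (rule DERIV_imp_deriv)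
qed

lemma bregman_perspective:
  fixes U :: "real \<Rightarrow> real"
  assumes a: "0 < a" and b: "0 < b" and U': "(U has_real_derivative U') (at b)"
  shows "bregman (\<lambda>z. z * U (1 / z)) (1 / a) (1 / b)
       = U a / a - U b / b - (U' * b - U b) * (1 / b - 1 / a)"
  unfolding bregman_def deriv_perspective[OF b U'] using a b by (simp add: field_simps)

lemma deriv_internal_fv:
  assumes U'': "\<And>z. 0 < z \<Longrightarrow> (U' has_real_derivative U'' z) (at z)"
    and U': "\<And>z. 0 < z \<Longrightarrow> deriv U z = U' z"
    and q_pos: "\<And>y. y \<in> {0<..<1} \<Longrightarrow> 0 < q y"
    and q': "(q has_real_derivative q' x) (at x)" and x: "x \<in> {0<..<1}"
  shows "deriv (internal_fv U q) x = U'' (q x) * q' x"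
proof -
  have "((\<lambda>y. U' (q y)) has_real_derivative U'' (q x) * q' x) (at x)"
    using DERIV_chain2[OF U'' q'] q_pos[OF x] by simp
  then have "(internal_fv U q has_real_derivative U'' (q x) * q' x) (at x)"
    by (rule has_field_derivative_transform_within_open[where S="{0<..<1}"])
       (use x q_pos U' in \<open>auto simp: internal_fv_def\<close>)
  then show ?thesis by (rule DERIV_imp_deriv)
qed

lemma pressure_has_real_derivative:
  assumes U': "\<And>z. 0 < z \<Longrightarrow> (U has_real_derivative U' z) (at z)"
    and U'': "\<And>z. 0 < z \<Longrightarrow> (U' has_real_derivative U'' z) (at z)"
    and q': "(q has_real_derivative q' x) (at x)" and "0 < q x"
  shows "((\<lambda>x. U' (q x) * q x - U (q x)) has_real_derivative U'' (q x) * q' x * q x) (at x)"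
proof -
  have "((\<lambda>x. U' (q x) * q x - U (q x)) has_real_derivative
          U'' (q x) * q' x * q x + q' x * U' (q x) - U' (q x) * q' x) (at x)"
    using \<open>0 < q x\<close>
    by (intro DERIV_diff DERIV_mult DERIV_chain2[OF U'' q'] DERIV_chain2[OF U' q'] q')
  then show ?thesis by (simp add: algebra_simps)
qed

lemma transport_linearization_internal:
  assumes p: "positive_continuous_density p" and q: "positive_continuous_density q"
    and q': "\<And>x. x \<in> {0..1} \<Longrightarrow> (q has_real_derivative q' x) (at x within {0..1})"
      "continuous_on {0..1} q'"
    and U': "\<And>z. 0 < z \<Longrightarrow> (U has_real_derivative U' z) (at z)"
    and U'': "\<And>z. 0 < z \<Longrightarrow> (U' has_real_derivative U'' z) (at z)" "continuous_on {0<..} U''"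
  defines "P \<equiv> \<lambda>x. U' (q x) * q x - U (q x)"
  shows "transport_linearization (internal_fv U) p q =
    integral {0..1} (\<lambda>s. P (inv_cdf q s) * (1 / q (inv_cdf q s) - 1 / p (inv_cdf p s)))"
proof -
  define P' where "P' x = U'' (q x) * q' x * q x" for x
  have Uc: "continuous_on {0<..} U" and U'c: "continuous_on {0<..} U'"
    by (rule DERIV_continuous_on, rule has_field_derivative_at_within, rule U' U''(1), simp)+
  have qc: "continuous_on {0..1} q"
    by (rule continuous_on_density[OF q])
  have q_pos: "0 < q x" if "x \<in> {0<..<1}" for x
    using density_pos[OF q] that by simp
  have q'_at: "(q has_real_derivative q' x) (at x)" if "x \<in> {0<..<1}" for x
    using q'(1)[of x] that by (simp add: at_within_Icc_at)
  have "transport_linearization (internal_fv U) p q = integral {0..1} (\<lambda>x. P' x * (ot_map p q x - x))"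
    unfolding transport_linearization_def
  proof (rule integral_cong_interior)
    fix x :: real assume x: "x \<in> {0<..<1}"
    have "deriv (internal_fv U q) x = U'' (q x) * q' x"
      by (rule deriv_internal_fv[where q'=q' and x=x, OF U''(1) DERIV_imp_deriv[OF U'] q_pos
          q'_at[OF x] x])
    then show "deriv (internal_fv U q) x * (ot_map p q x - x) * q x = P' x * (ot_map p q x - x)"
      by (simp add: P'_def)
  qed
  also have "\<dots> = integral {0..1} (\<lambda>s. P (inv_cdf q s) * (1 / q (inv_cdf q s) - 1 / p (inv_cdf p s)))"
  proof (rule integral_deriv_mult_ot_map_displacement[OF p q])
    show "continuous_on {0..1} P"
      unfolding P_def by (intro continuous_intros continuous_on_compose_density[OF q] U'c Uc qc)
    show "continuous_on {0..1} P'"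
      unfolding P'_def by (intro continuous_intros continuous_on_compose_density[OF q] U''(2) q'(2) qc)
    show "(P has_real_derivative P' x) (at x)" if "x \<in> {0<..<1}" for x
      unfolding P_def P'_def
      by (rule pressure_has_real_derivative[where q'=q' and x=x, OF U' U''(1) q'_at[OF that]
          q_pos[OF that]])
  qed
  finally show ?thesis .
qed

lemma transport_bregman_internal_energy:
  assumes p: "positive_continuous_density p" and q: "positive_continuous_density q"
    and q': "\<And>x. x \<in> {0..1} \<Longrightarrow> (q has_real_derivative q' x) (at x within {0..1})"
      "continuous_on {0..1} q'"
    and U: "C2_on {0<..} U"
  shows "transport_bregman (internal_energy U) (internal_fv U) p q =
    integral {0..1} (\<lambda>s. bregman (\<lambda>z. z * U (1 / z)) (deriv (inv_cdf p) s) (deriv (inv_cdf q) s))"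
proof -
  obtain U' U'' where U': "\<And>z. 0 < z \<Longrightarrow> (U has_real_derivative U' z) (at z)"
    and U'': "\<And>z. 0 < z \<Longrightarrow> (U' has_real_derivative U'' z) (at z)" "continuous_on {0<..} U''"
    using U unfolding C2_on_def by (auto simp: at_within_open[of _ "{0<..}"])
  have Uc: "continuous_on {0<..} U" and U'c: "continuous_on {0<..} U'"
    by (rule DERIV_continuous_on, rule has_field_derivative_at_within, rule U' U''(1), simp)+
  define X Y where "X = inv_cdf q" and "Y = inv_cdf p"
  define P where "P x = U' (q x) * q x - U (q x)" for x
  have "integral {0..1} (\<lambda>s. bregman (\<lambda>z. z * U (1 / z)) (deriv Y s) (deriv X s))
      = integral {0..1} (\<lambda>s. U (p (Y s)) / p (Y s) - U (q (X s)) / q (X s)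
                             - P (X s) * (1 / q (X s) - 1 / p (Y s)))"
  proof (rule integral_cong_interior)
    fix s :: real assume s: "s \<in> {0<..<1}"
    then have s01: "s \<in> {0..1}" by simp
    have pY: "0 < p (Y s)" and qX: "0 < q (X s)"
      unfolding X_def Y_def
      using density_pos[OF p inv_cdf_in[OF p s01]] density_pos[OF q inv_cdf_in[OF q s01]] .
    have "deriv Y s = 1 / p (Y s)" and "deriv X s = 1 / q (X s)"
      unfolding X_def Y_def by (intro DERIV_imp_deriv inv_cdf_has_real_derivative p q s)+
    with bregman_perspective[OF pY qX U'[OF qX]]
    show "bregman (\<lambda>z. z * U (1 / z)) (deriv Y s) (deriv X s)
      = U (p (Y s)) / p (Y s) - U (q (X s)) / q (X s) - P (X s) * (1 / q (X s) - 1 / p (Y s))"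
      by (simp add: P_def)
  qed
  also have "\<dots> = internal_energy U p - internal_energy U q - transport_linearization (internal_fv U) p q"
  proof -
    have "continuous_on {0..1} P"
      unfolding P_def
      by (intro continuous_intros continuous_on_compose_density[OF q] Uc U'c continuous_on_density[OF q])
    then have "continuous_on {0..1} (\<lambda>s. P (X s) * (1 / q (X s) - 1 / p (Y s)))"
      unfolding X_def Y_def
      by (intro continuous_on_mult continuous_on_diff continuous_on_compose_inv_cdf[OF q]
          continuous_on_compose_inv_cdf[OF q continuous_on_inverse_density[OF q]]
          continuous_on_compose_inv_cdf[OF p continuous_on_inverse_density[OF p]])
    moreover have "continuous_on {0..1} (\<lambda>s. U (p (Y s)) / p (Y s))"
      and "continuous_on {0..1} (\<lambda>s. U (q (X s)) / q (X s))"
      unfolding X_def Y_def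
      by (intro continuous_on_compose_inv_cdf continuous_on_compose_density_divide p q Uc)+
    ultimately show ?thesis
      using internal_energy_inv_cdf[OF p Uc] internal_energy_inv_cdf[OF q Uc]
        transport_linearization_internal[OF p q q' U' U'']
      by (simp add: X_def Y_def P_def integral_diff integrable_diff integrable_continuous_real)
  qed
  finally show ?thesis
    by (simp add: transport_bregman_eq X_def Y_def)
qed

theorem mainTheorem3:
  fixes p q :: "real \<Rightarrow> real"
  assumes "smooth_pos_density p" and "smooth_pos_density q"
  shows "(\<forall>V. smooth_on {0..1} V \<longrightarrow>
            transport_bregman (potential_energy V) (potential_fv V) p q =
            integral {0..1} (\<lambda>s. bregman V (inv_cdf p s) (inv_cdf q s)))
       \<and> (\<forall>W. smooth_on {-1..1} W \<longrightarrow> (\<forall>z\<in>{-1..1}. W (- z) = W z) \<longrightarrow>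
            transport_bregman (interaction_energy W) (interaction_fv W) p q =
            1/2 * integral {0..1} (\<lambda>s. integral {0..1} (\<lambda>t.
               bregman W (inv_cdf p s - inv_cdf p t) (inv_cdf q s - inv_cdf q t))))
       \<and> (\<forall>U. C2_on {0<..} U \<longrightarrow>
            transport_bregman (internal_energy U) (internal_fv U) p q =
            integral {0..1} (\<lambda>s. bregman (\<lambda>z. z * U (1 / z))
               (deriv (inv_cdf p) s) (deriv (inv_cdf q) s)))"
proof -
  have p: "positive_continuous_density p" and q: "positive_continuous_density q"
    using assms by (simp_all add: smooth_pos_density_imp_positive_continuous_density)
  have potential: "transport_bregman (potential_energy V) (potential_fv V) p q =
      integral {0..1} (\<lambda>s. bregman V (inv_cdf p s) (inv_cdf q s))"
    if V: "smooth_on {0..1} V" for V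
  proof -
    obtain V' where "\<And>x. x \<in> {0..1} \<Longrightarrow> (V has_real_derivative V' x) (at x within {0..1})"
      and "continuous_on {0..1} V'" using smooth_on_imp_C1[OF V] by blast
    then show ?thesis by (rule transport_bregman_potential_energy[OF p q])
  qed
  have interaction: "transport_bregman (interaction_energy W) (interaction_fv W) p q =
      1/2 * integral {0..1} (\<lambda>s. integral {0..1} (\<lambda>t.
        bregman W (inv_cdf p s - inv_cdf p t) (inv_cdf q s - inv_cdf q t)))"
    if W: "smooth_on {-1..1} W" and even: "\<forall>z\<in>{-1..1}. W (- z) = W z" for W
  proof -
    obtain W' where "\<And>z. z \<in> {-1..1} \<Longrightarrow> (W has_real_derivative W' z) (at z within {-1..1})"
      and "continuous_on {-1..1} W'" using smooth_on_imp_C1[OF W] by blast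
    with even show ?thesis by (intro transport_bregman_interaction_energy[OF p q]) auto
  qed
  obtain q' where "\<And>x. x \<in> {0..1} \<Longrightarrow> (q has_real_derivative q' x) (at x within {0..1})"
    and "continuous_on {0..1} q'"
    using assms(2) unfolding smooth_pos_density_def by (metis smooth_on_imp_C1)
  note internal = transport_bregman_internal_energy[OF p q this]
  show ?thesis
    using potential interaction internal by blast
qed

end
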